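(* Consider problem (P2): $\sup_{u\in\Gamma^{nT}}J(u)$, and problem (P3): $$\max_{u,\rho,\lambda,\mu,\nu,\eta}\ -\lambda\epsilon(\beta)-\frac1N\sum_{e\in\mathcal E,t\in\mathcal T,l\in\mathcal L}\bar f_e\bar\rho_e\eta^{(l)}_e(t)+\frac1N\sum_{l\in\mathcal L}\langle\nu^{(l)},\rho^{(l)}\rangle$$ subject to, for all $l\in\mathcal L=\{1,\dots,N\}$, $e\in\mathcal E$, $t\in\mathcal T$: $\big(\bar f_e+(\bar\rho_e-\bar f_e/\bar u_e)u_e(t)\big)\eta^{(l)}_e(t)-\mu^{(l)}_e(t)\ge0$; $\nu^{(l)}=\mu^{(l)}+\frac1Tu$; $\|\nu^{(l)}\|_\star\le\lambda$; $\eta^{(l)}\ge0$; $u\in\Gamma^{nT}$; and each $\rho^{(l)}\in\mathbb{R}^{nT}$ is the admissible sample trajectory generated under $u$ from the sample $\varpi^{(l)}$ (dynamics and admissibility constraints with $\varpi^{(l)}$ in place of $\varpi$). Then (P2) is equivalent to (P3) in the sense that their optimal objective values coincide and the set of optimizers of (P2) is the projection (onto $u$) of the set of optimizers of (P3). Further, for any feasible point $(u,\rho,\lambda,\mu,\nu,\eta)$ of (P3) with objective value $\hat J(u)$, one has $\mathrm{Prob}^N\big(\mathbb{E}_{\mathbb{P}(u)}[H(u;\rho)]\ge\hat J(u)\big)\ge1-\beta$.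
   Context: Highway model. Fix integers $n\ge1$, $T\ge1$; segments $e\in\mathcal{E}=\{1,\dots,n\}$ (segment $e\ge2$ has preceding segment $e-1$), time slots $t\in\mathcal{T}=\{0,\dots,T-1\}$. For each $e$: constants $h_e>0$, $\bar\rho_e>0$, $\bar f_e>0$, $\bar u_e>0$ with $\bar u_e\bar\rho_e>\bar f_e$; $\tau_e=\bar f_e/(\bar u_e\bar\rho_e-\bar f_e)$; critical density $\rho^c_e(v)=\tau_e\bar\rho_e\bar u_e/(\tau_e\bar u_e+v)$. Finite set $\Gamma\subset(0,\infty)$ of speed limits; $u=(u_e(t))\in\Gamma^{nT}$. Random vector $\varpi=(\omega,\rho(0),r^{in},r^{o})$ ($\omega(t)\ge0$, $\rho(0)\in\mathbb{R}^n_{\ge0}$, $r^{in}_e(t),r^{o}_e(t)\in[0,1)$) with distribution $\mathbb{P}_\varpi$, assumed light-tailed ($\mathbb{E}[\exp(\|\varpi\|^a)]<\infty$ for some $a>1$). Given $u$ and $\varpi$, trajectory $\rho\in\mathbb{R}^{nT}$: $\rho_1(t+1)=\rho_1(t)+h_1(\omega(t)-u_1(t)\rho_1(t))$; for $e\ge2$, $\rho_e(t+1)=\rho_e(t)+h_e\kappa_e(t)u_{e-1}(t)\rho_{e-1}(t)-h_eu_e(t)\rho_e(t)$, $\kappa_e(t)=\frac{1-r^{o}_{e-1}(t)}{1-r^{in}_e(t)}$, with admissibility $\kappa_e(t)u_{e-1}(t)\rho_{e-1}(t)\le\min\{\bar f_e,\tau_e\bar u_e(\bar\rho_e-\rho_e(t))\}$.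 $\mathbb{P}(u)$ is the law of $\rho$ under $\varpi\sim\mathbb{P}_\varpi$, supported on $\mathcal{Z}(u)=\{\rho:0\le\rho_e(t)\le\rho^c_e(u_e(t))\}$. $H(u;\rho)=\frac1T\sum_{e,t}\rho_e(t)u_e(t)$. Given $N$ i.i.d. samples $\varpi^{(l)}$, $l\in\mathcal L$, with trajectories $\rho^{(l)}$, $\hat{\mathbb{P}}(u)=\frac1N\sum_l\delta_{\rho^{(l)}}$; $\beta\in(0,1)$ and $\epsilon(\beta)>0$ is a Wasserstein radius such that $\mathrm{Prob}^N(\mathbb{P}(u)\in\mathcal{P}(u))\ge1-\beta$, where $\mathcal{P}(u)=\mathbb{B}_{\epsilon(\beta)}(\hat{\mathbb{P}}(u))\cap\mathcal{M}_{lt}(\mathcal{Z}(u))$ ($\mathbb{B}_\epsilon$ = Wasserstein ball w.r.t. the 1-norm, $\mathcal M_{lt}$ = light-tailed distributions); $J(u)=\inf_{\mathbb{Q}\in\mathcal{P}(u)}\mathbb{E}_{\mathbb{Q}}[H(u;\rho)]$. $\|\cdot\|$ is the 1-norm and $\|\cdot\|_\star$ its dual (the $\infty$-norm). $\mathrm{Prob}^N$ is the product probability over the $N$ samples. *)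

theory Defs
  imports "HOL-Probability.Probability"
begin

text \<open>Highway parameters: h, rho-bar, f-bar, u-bar (indexed by segment e = 1..n).\<close>
record hwy =
  hh :: "nat \<Rightarrow> real"
  rhobar :: "nat \<Rightarrow> real"
  fbar :: "nat \<Rightarrow> real"
  ubar :: "nat \<Rightarrow> real"

text \<open>Random vector varpi = (omega, rho(0), r_in, r_out); r_in e t, r_out e t.\<close>
record varpi =
  om :: "nat \<Rightarrow> real"
  rho0 :: "nat \<Rightarrow> real"
  rin :: "nat \<Rightarrow> nat \<Rightarrow> real"
  rout :: "nat \<Rightarrow> nat \<Rightarrow> real"

text \<open>Index set E x T = {1..n} x {0..T-1}; vectors in R^{nT} are extensional
  functions on it.\<close>
definition Idx :: "nat \<Rightarrow> nat \<Rightarrow> (nat \<times> nat) set" where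
  "Idx n T = {1..n} \<times> {..<T}"

definition Mtraj :: "nat \<Rightarrow> nat \<Rightarrow> (nat \<times> nat \<Rightarrow> real) measure" where
  "Mtraj n T = PiM (Idx n T) (\<lambda>_. borel)"

definition norm1 :: "(nat \<times> nat) set \<Rightarrow> (nat \<times> nat \<Rightarrow> real) \<Rightarrow> real" where
  "norm1 I x = (\<Sum>i\<in>I. \<bar>x i\<bar>)"

definition dual_norm :: "(nat \<times> nat) set \<Rightarrow> (nat \<times> nat \<Rightarrow> real) \<Rightarrow> real" where
  "dual_norm I x = Max ((\<lambda>i. \<bar>x i\<bar>) ` I)"

definition varpi_norm :: "nat \<Rightarrow> nat \<Rightarrow> varpi \<Rightarrow> real" where
  "varpi_norm n T w = (\<Sum>t<T. \<bar>om w t\<bar>) + (\<Sum>e\<in>{1..n}. \<bar>rho0 w e\<bar>)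
     + (\<Sum>e\<in>{1..n}. \<Sum>t<T. \<bar>rin w e t\<bar> + \<bar>rout w e t\<bar>)"

definition tau :: "hwy \<Rightarrow> nat \<Rightarrow> real" where
  "tau p e = fbar p e / (ubar p e * rhobar p e - fbar p e)"

definition rhoc :: "hwy \<Rightarrow> nat \<Rightarrow> real \<Rightarrow> real" where
  "rhoc p e v = tau p e * rhobar p e * ubar p e / (tau p e * ubar p e + v)"

definition kappa :: "varpi \<Rightarrow> nat \<Rightarrow> nat \<Rightarrow> real" where
  "kappa w e t = (1 - rout w (e - 1) t) / (1 - rin w e t)"

text \<open>Dynamics: rho_traj p u w t e = rho_e(t).\<close>
fun rho_traj :: "hwy \<Rightarrow> (nat \<times> nat \<Rightarrow> real) \<Rightarrow> varpi \<Rightarrow> nat \<Rightarrow> nat \<Rightarrow> real" where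
  "rho_traj p u w 0 e = rho0 w e"
| "rho_traj p u w (Suc t) e =
     (if e = 1 then rho_traj p u w t 1 + hh p 1 * (om w t - u (1, t) * rho_traj p u w t 1)
      else rho_traj p u w t e + hh p e * kappa w e t * u (e - 1, t) * rho_traj p u w t (e - 1)
             - hh p e * u (e, t) * rho_traj p u w t e)"

definition traj_vec :: "nat \<Rightarrow> nat \<Rightarrow> hwy \<Rightarrow> (nat \<times> nat \<Rightarrow> real) \<Rightarrow> varpi \<Rightarrow> (nat \<times> nat \<Rightarrow> real)" where
  "traj_vec n T p u w = restrict (\<lambda>(e, t). rho_traj p u w t e) (Idx n T)"

definition admissible :: "nat \<Rightarrow> nat \<Rightarrow> hwy \<Rightarrow> (nat \<times> nat \<Rightarrow> real) \<Rightarrow> varpi \<Rightarrow> bool" where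
  "admissible n T p u w \<longleftrightarrow>
     (\<forall>e\<in>{2..n}. \<forall>t<T. kappa w e t * u (e - 1, t) * rho_traj p u w t (e - 1)
        \<le> min (fbar p e) (tau p e * ubar p e * (rhobar p e - rho_traj p u w t e)))"

definition Zset :: "nat \<Rightarrow> nat \<Rightarrow> hwy \<Rightarrow> (nat \<times> nat \<Rightarrow> real) \<Rightarrow> (nat \<times> nat \<Rightarrow> real) set" where
  "Zset n T p u = {x \<in> space (Mtraj n T). \<forall>(e, t)\<in>Idx n T. 0 \<le> x (e, t) \<and> x (e, t) \<le> rhoc p e (u (e, t))}"

definition Hcost :: "nat \<Rightarrow> nat \<Rightarrow> (nat \<times> nat \<Rightarrow> real) \<Rightarrow> (nat \<times> nat \<Rightarrow> real) \<Rightarrow> real" where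
  "Hcost n T u x = (1 / real T) * (\<Sum>i\<in>Idx n T. x i * u i)"

definition controls :: "nat \<Rightarrow> nat \<Rightarrow> real set \<Rightarrow> (nat \<times> nat \<Rightarrow> real) set" where
  "controls n T \<Gamma> = PiE (Idx n T) (\<lambda>_. \<Gamma>)"

definition dists_on :: "'a measure \<Rightarrow> 'a set \<Rightarrow> 'a measure set" where
  "dists_on M Z = {Q. prob_space Q \<and> sets Q = sets M \<and> (AE x in Q. x \<in> Z)}"

definition lt_dists :: "(nat \<times> nat) set \<Rightarrow> (nat \<times> nat \<Rightarrow> real) measure \<Rightarrow> (nat \<times> nat \<Rightarrow> real) set
    \<Rightarrow> (nat \<times> nat \<Rightarrow> real) measure set" where
  "lt_dists I M Z = {Q \<in> dists_on M Z. \<exists>a>1. (\<integral>\<^sup>+ x. ennreal (exp (norm1 I x powr a)) \<partial>Q) < \<infinity>}"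

definition couplings :: "'a measure \<Rightarrow> 'a measure \<Rightarrow> 'a measure \<Rightarrow> ('a \<times> 'a) measure set" where
  "couplings M Q P = {\<pi>. sets \<pi> = sets (M \<Otimes>\<^sub>M M) \<and> distr \<pi> M fst = Q \<and> distr \<pi> M snd = P}"

definition wasserstein :: "(nat \<times> nat) set \<Rightarrow> (nat \<times> nat \<Rightarrow> real) measure
    \<Rightarrow> (nat \<times> nat \<Rightarrow> real) measure \<Rightarrow> (nat \<times> nat \<Rightarrow> real) measure \<Rightarrow> ennreal" where
  "wasserstein I M Q P = (INF \<pi>\<in>couplings M Q P. \<integral>\<^sup>+ z. ennreal (norm1 I (\<lambda>i. fst z i - snd z i)) \<partial>\<pi>)"

definition empirical :: "nat \<Rightarrow> nat \<Rightarrow> hwy \<Rightarrow> nat \<Rightarrow> (nat \<Rightarrow> varpi) \<Rightarrow> (nat \<times> nat \<Rightarrow> real)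
    \<Rightarrow> (nat \<times> nat \<Rightarrow> real) measure" where
  "empirical n T p N ws u = distr (uniform_count_measure {..<N}) (Mtraj n T) (\<lambda>l. traj_vec n T p u (ws l))"

definition ambiguity_set :: "nat \<Rightarrow> nat \<Rightarrow> hwy \<Rightarrow> real \<Rightarrow> nat \<Rightarrow> (nat \<Rightarrow> varpi)
    \<Rightarrow> (nat \<times> nat \<Rightarrow> real) \<Rightarrow> (nat \<times> nat \<Rightarrow> real) measure set" where
  "ambiguity_set n T p \<epsilon> N ws u =
     {Q. wasserstein (Idx n T) (Mtraj n T) Q (empirical n T p N ws u) \<le> ennreal \<epsilon>}
     \<inter> lt_dists (Idx n T) (Mtraj n T) (Zset n T p u)"

definition Jval :: "nat \<Rightarrow> nat \<Rightarrow> hwy \<Rightarrow> real \<Rightarrow> nat \<Rightarrow> (nat \<Rightarrow> varpi) \<Rightarrow> (nat \<times> nat \<Rightarrow> real) \<Rightarrow> ereal" where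
  "Jval n T p \<epsilon> N ws u = (INF Q\<in>ambiguity_set n T p \<epsilon> N ws u. ereal (\<integral>x. Hcost n T u x \<partial>Q))"

type_synonym vec = "nat \<times> nat \<Rightarrow> real"
type_synonym p3var = "vec \<times> (nat \<Rightarrow> vec) \<times> real \<times> (nat \<Rightarrow> vec) \<times> (nat \<Rightarrow> vec) \<times> (nat \<Rightarrow> vec)"

definition feas3 :: "nat \<Rightarrow> nat \<Rightarrow> hwy \<Rightarrow> real set \<Rightarrow> nat \<Rightarrow> (nat \<Rightarrow> varpi) \<Rightarrow> p3var set" where
  "feas3 n T p \<Gamma> N ws = {(u, \<rho>, lam, \<mu>, \<nu>, \<eta>).
     u \<in> controls n T \<Gamma> \<and>
     (\<forall>l<N. \<rho> l = traj_vec n T p u (ws l) \<and> admissible n T p u (ws l)) \<and>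
     (\<forall>l<N. \<forall>(e, t)\<in>Idx n T.
        (fbar p e + (rhobar p e - fbar p e / ubar p e) * u (e, t)) * \<eta> l (e, t) - \<mu> l (e, t) \<ge> 0 \<and>
        \<nu> l (e, t) = \<mu> l (e, t) + (1 / real T) * u (e, t) \<and>
        \<eta> l (e, t) \<ge> 0) \<and>
     (\<forall>l<N. dual_norm (Idx n T) (\<nu> l) \<le> lam)}"

definition obj3 :: "nat \<Rightarrow> nat \<Rightarrow> hwy \<Rightarrow> real \<Rightarrow> nat \<Rightarrow> p3var \<Rightarrow> real" where
  "obj3 n T p \<epsilon> N q = (case q of (u, \<rho>, lam, \<mu>, \<nu>, \<eta>) \<Rightarrow>
     - lam * \<epsilon>
     - (1 / real N) * (\<Sum>l<N. \<Sum>(e, t)\<in>Idx n T. fbar p e * rhobar p e * \<eta> l (e, t))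
     + (1 / real N) * (\<Sum>l<N. \<Sum>i\<in>Idx n T. \<nu> l i * \<rho> l i))"

end

theory Submission
  imports Defs
begin

text \<open>For a fixed control u, J(u) is the value of a transport problem: among the distributions
  on the box Z(u) within 1-norm Wasserstein distance eps of the empirical distribution of the sample
  trajectories, minimise the expected cost, H being linear. A feasible point of (P3) is a dual
  certificate: its constraints bound the l-th sample term of obj3 by H x + lam * |x - rho_l|_1 for
  every x in Z(u), and integrating the maximum of these bounds over a coupling gives obj3 <= E_Q H
  for every Q in the ambiguity set. The bound is attained: lowering the sample densities, those with
  the largest cost coefficient u/T first, is a fractional knapsack, and its threshold lam gives the
  (P3) point nu = min (u/T) lam, mu = nu - u/T, eta = 0, whose value is the expected cost of the
  lowered empirical distribution. So J(u) is the maximum of obj3 over the (P3) points above u, which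
  yields both equalities; the probabilistic bound is weak duality on the event that the true
  distribution lies in the ambiguity set.\<close>

section \<open>Fractional knapsack\<close>

lemma knapsack_threshold:
  fixes c r :: "'a \<Rightarrow> real"
  assumes "finite K" and "0 \<le> B" and "B \<le> sum r K" and "K \<noteq> {}"
  obtains lam where "lam \<in> c ` K"
    and "(\<Sum>k\<in>{k\<in>K. lam < c k}. r k) \<le> B" and "B \<le> (\<Sum>k\<in>{k\<in>K. lam \<le> c k}. r k)"
proof -
  define A where "A t = (\<Sum>k\<in>{k\<in>K. t \<le> c k}. r k)" for t
  define S where "S = {t \<in> c ` K. B \<le> A t}"
  have "finite S" using \<open>finite K\<close> by (simp add: S_def)
  have "Min (c ` K) \<in> S"
  proof -
    have "{k\<in>K. Min (c ` K) \<le> c k} = K" using \<open>finite K\<close> by auto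
    then show ?thesis using assms by (simp add: S_def A_def)
  qed
  then have "S \<noteq> {}" by blast
  define lam where "lam = Max S"
  have lam: "lam \<in> c ` K" "B \<le> A lam"
    using Max_in[OF \<open>finite S\<close> \<open>S \<noteq> {}\<close>] by (auto simp: lam_def S_def)
  have "(\<Sum>k\<in>{k\<in>K. lam < c k}. r k) \<le> B"
  proof (rule ccontr)
    assume B_lt: "\<not> ?thesis"
    then have "{k\<in>K. lam < c k} \<noteq> {}" using \<open>0 \<le> B\<close> by (metis sum.empty)
    \<comment> \<open>the next value of c above lam would still reach B, contradicting maximality\<close>
    define t where "t = Min (c ` {k\<in>K. lam < c k})"
    have "t \<in> c ` {k\<in>K. lam < c k}"
      unfolding t_def using \<open>finite K\<close> \<open>{k\<in>K. lam < c k} \<noteq> {}\<close> by (intro Min_in) auto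
    then have t: "t \<in> c ` K" "lam < t" by auto
    have "t \<le> c k" if "k \<in> K" "lam < c k" for k
      unfolding t_def using \<open>finite K\<close> that by (intro Min_le) auto
    then have "{k\<in>K. t \<le> c k} = {k\<in>K. lam < c k}" using t by force
    then have "t \<in> S" using t B_lt by (simp add: S_def A_def)
    then show False using Max_ge[OF \<open>finite S\<close>] t by (fastforce simp: lam_def)
  qed
  then show ?thesis using that lam by (simp add: A_def)
qed

lemma sum_mult_diff_eq_threshold:
  fixes c d r :: "'a \<Rightarrow> real"
  assumes "\<And>k. k \<in> K \<Longrightarrow> lam < c k \<Longrightarrow> d k = r k"
    and "\<And>k. k \<in> K \<Longrightarrow> c k < lam \<Longrightarrow> d k = 0"
  shows "(\<Sum>k\<in>K. c k * (r k - d k)) = (\<Sum>k\<in>K. min (c k) lam * r k) - lam * sum d K"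
proof -
  have "c k * (r k - d k) = min (c k) lam * r k - lam * d k" if "k \<in> K" for k
    using assms[OF that] by (cases "lam < c k"; cases "c k < lam") (auto simp: algebra_simps)
  then show ?thesis by (simp add: sum_subtractf sum_distrib_left)
qed

text \<open>(lam, d) is an optimal primal-dual pair for removing at most B units from the amounts r so
  that the remaining value is least: d removes the most valuable units (by c) first, and lam is the
  threshold value.\<close>

lemma fractional_knapsack:
  fixes c r :: "'a \<Rightarrow> real"
  assumes "finite K" and r: "\<And>k. k \<in> K \<Longrightarrow> 0 \<le> r k" and c: "\<And>k. k \<in> K \<Longrightarrow> 0 \<le> c k"
    and "0 \<le> B"
  obtains lam d where "0 \<le> lam" and "\<And>k. k \<in> K \<Longrightarrow> 0 \<le> d k \<and> d k \<le> r k" and "sum d K \<le> B"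
    and "(\<Sum>k\<in>K. c k * (r k - d k)) = (\<Sum>k\<in>K. min (c k) lam * r k) - lam * B"
proof (cases "sum r K \<le> B")
  case True
  have "(\<Sum>k\<in>K. c k * (r k - r k)) = (\<Sum>k\<in>K. min (c k) 0 * r k) - 0 * B"
    using c by (auto intro!: sum.neutral)
  then show ?thesis using that[of 0 r] True r by auto
next
  case False
  then have "K \<noteq> {}" using \<open>0 \<le> B\<close> by auto
  obtain lam where lam: "lam \<in> c ` K"
    and upper: "(\<Sum>k\<in>{k\<in>K. lam < c k}. r k) \<le> B" and lower: "B \<le> (\<Sum>k\<in>{k\<in>K. lam \<le> c k}. r k)"
    using knapsack_threshold[of K B r c] \<open>finite K\<close> \<open>0 \<le> B\<close> False \<open>K \<noteq> {}\<close> by auto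
  define above where "above = (\<Sum>k\<in>{k\<in>K. lam < c k}. r k)"
  define level where "level = (\<Sum>k\<in>{k\<in>K. c k = lam}. r k)"
  have "{k\<in>K. lam \<le> c k} = {k\<in>K. lam < c k} \<union> {k\<in>K. c k = lam}" by auto
  then have "(\<Sum>k\<in>{k\<in>K. lam \<le> c k}. r k) = above + level"
    using \<open>finite K\<close> by (simp add: above_def level_def sum.union_disjoint[symmetric] disjoint_iff)
  then have gap: "0 \<le> B - above" "B - above \<le> level" using upper lower by (simp_all add: above_def)
  \<comment> \<open>the budget left over by the items above the threshold is spent on a fraction th of those at it\<close>
  define th where "th = (B - above) / level"
  have th: "0 \<le> th" "th \<le> 1" "th * level = B - above"
    by (cases "level = 0") (use gap in \<open>auto simp: th_def divide_le_eq_1\<close>)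
  define d where "d k = (if lam < c k then r k else if c k = lam then th * r k else 0)" for k
  have "K \<inter> {k. lam < c k} = {k\<in>K. lam < c k}" "K \<inter> - {k. lam < c k} \<inter> {k. c k = lam} = {k\<in>K. c k = lam}"
    by auto
  then have "sum d K = above + th * level"
    using \<open>finite K\<close> by (simp add: d_def above_def level_def sum.If_cases sum_distrib_left)
  then have "sum d K = B" using th by simp
  moreover have "(\<Sum>k\<in>K. c k * (r k - d k)) = (\<Sum>k\<in>K. min (c k) lam * r k) - lam * sum d K"
    by (rule sum_mult_diff_eq_threshold) (auto simp: d_def)
  moreover have "\<And>k. k \<in> K \<Longrightarrow> 0 \<le> d k \<and> d k \<le> r k"
    using r th by (auto simp: d_def mult_left_le_one_le)
  ultimately show ?thesis using that[of lam d] c lam by auto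
qed

section \<open>Empirical distributions and the Wasserstein distance\<close>

lemma measurable_uniform_count_measure:
  "g \<in> A \<rightarrow> space M \<Longrightarrow> g \<in> measurable (uniform_count_measure A) M"
  by (simp add: measurable_cong_sets[OF sets_uniform_count_measure_count_space refl]
      measurable_count_space_eq1)

lemma
  fixes f :: "'b \<Rightarrow> real"
  assumes "finite A" and g: "g \<in> A \<rightarrow> space M" and f: "f \<in> borel_measurable M"
  shows integrable_distr_uniform_count_measure: "integrable (distr (uniform_count_measure A) M g) f"
    and integral_distr_uniform_count_measure:
      "(\<integral>x. f x \<partial>distr (uniform_count_measure A) M g) = (\<Sum>a\<in>A. f (g a)) / card A"
proof -
  note g' = measurable_uniform_count_measure[OF g]
  show "integrable (distr (uniform_count_measure A) M g) f"
    using integrable_distr_eq[OF g' f] integrable_point_measure_finite[OF \<open>finite A\<close>]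
    by (simp add: uniform_count_measure_def)
  show "(\<integral>x. f x \<partial>distr (uniform_count_measure A) M g) = (\<Sum>a\<in>A. f (g a)) / card A"
    using integral_distr[OF g' f] integral_uniform_count_measure[OF \<open>finite A\<close>] by simp
qed

lemma nn_integral_distr_uniform_count_measure:
  fixes f :: "'b \<Rightarrow> real"
  assumes "finite A" and "g \<in> A \<rightarrow> space M" and "f \<in> borel_measurable M" and "\<And>x. 0 \<le> f x"
  shows "(\<integral>\<^sup>+x. f x \<partial>distr (uniform_count_measure A) M g) = ennreal ((\<Sum>a\<in>A. f (g a)) / card A)"
  using nn_integral_eq_integral[OF integrable_distr_uniform_count_measure[OF assms(1-3)]]
    integral_distr_uniform_count_measure[OF assms(1-3)] assms(4) by simp

lemma measurable_Mtraj_component: "i \<in> Idx n T \<Longrightarrow> (\<lambda>x. x i) \<in> borel_measurable (Mtraj n T)"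
  unfolding Mtraj_def by (rule measurable_component_singleton)

lemma space_Mtraj: "space (Mtraj n T) = (\<Pi>\<^sub>E i\<in>Idx n T. UNIV)"
  by (simp add: Mtraj_def space_PiM)

lemma traj_vec_in_space: "traj_vec n T p u w \<in> space (Mtraj n T)"
  by (auto simp: traj_vec_def space_Mtraj)

lemma finite_Idx: "finite (Idx n T)"
  by (simp add: Idx_def)

lemma Idx_nonempty: "1 \<le> n \<Longrightarrow> 1 \<le> T \<Longrightarrow> (1, 0) \<in> Idx n T"
  by (simp add: Idx_def)

lemma borel_measurable_Hcost: "Hcost n T u \<in> borel_measurable (Mtraj n T)"
  unfolding Hcost_def using measurable_Mtraj_component by measurable

lemma borel_measurable_norm1: "norm1 (Idx n T) \<in> borel_measurable (Mtraj n T)"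
  unfolding norm1_def using measurable_Mtraj_component by measurable

lemma borel_measurable_norm1_diff:
  "(\<lambda>z. norm1 (Idx n T) (\<lambda>i. fst z i - snd z i)) \<in> borel_measurable (Mtraj n T \<Otimes>\<^sub>M Mtraj n T)"
  unfolding norm1_def using measurable_Mtraj_component by measurable

lemma sets_Zset: "Zset n T p u \<in> sets (Mtraj n T)"
proof -
  have "Zset n T p u = {x\<in>space (Mtraj n T). \<forall>i\<in>Idx n T. 0 \<le> x i \<and> x i \<le> rhoc p (fst i) (u i)}"
    by (auto simp: Zset_def)
  also have "\<dots> \<in> sets (Mtraj n T)"
    using measurable_Mtraj_component finite_Idx by measurable
  finally show ?thesis .
qed

lemma norm1_nonneg: "0 \<le> norm1 I x"
  by (simp add: norm1_def sum_nonneg)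

lemma norm1_diff_triangle:
  "norm1 I (\<lambda>i. x i - z i) \<le> norm1 I (\<lambda>i. x i - y i) + norm1 I (\<lambda>i. y i - z i)"
  unfolding norm1_def sum.distrib[symmetric] by (rule sum_mono) linarith

lemma abs_le_dual_norm: "finite I \<Longrightarrow> i \<in> I \<Longrightarrow> \<bar>x i\<bar> \<le> dual_norm I x"
  unfolding dual_norm_def by (rule Max_ge) auto

lemma Zset_memD: "x \<in> Zset n T p u \<Longrightarrow> i \<in> Idx n T \<Longrightarrow> 0 \<le> x i \<and> x i \<le> rhoc p (fst i) (u i)"
  unfolding Zset_def by (cases i) fastforce

lemma MAX_sub_norm1_le:
  fixes N :: nat
  assumes "0 < N" and "0 \<le> lam"
    and bound: "\<And>l. l < N \<Longrightarrow> s l \<le> h + lam * norm1 I (\<lambda>i. x i - \<rho> l i)"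
  shows "(MAX l\<in>{..<N}. s l - lam * norm1 I (\<lambda>i. y i - \<rho> l i)) \<le> h + lam * norm1 I (\<lambda>i. x i - y i)"
proof -
  have "s l - lam * norm1 I (\<lambda>i. y i - \<rho> l i) \<le> h + lam * norm1 I (\<lambda>i. x i - y i)" if "l < N" for l
  proof -
    have "lam * norm1 I (\<lambda>i. x i - \<rho> l i) \<le> lam * norm1 I (\<lambda>i. x i - y i) + lam * norm1 I (\<lambda>i. y i - \<rho> l i)"
      using mult_left_mono[OF norm1_diff_triangle \<open>0 \<le> lam\<close>] by (simp add: distrib_left)
    then show ?thesis using bound[OF that] by linarith
  qed
  moreover have "{..<N} \<noteq> {}" using \<open>0 < N\<close> by (simp add: lessThan_empty_iff)
  ultimately show ?thesis by (simp add: Max_le_iff)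
qed

lemma integral_le_coupling:
  fixes f g :: "'a \<Rightarrow> real" and c :: "'a \<times> 'a \<Rightarrow> real"
  assumes \<pi>: "\<pi> \<in> couplings M Q P" and "0 \<le> lam" and "0 \<le> \<kappa>"
    and f: "integrable Q f" and g: "integrable P g"
    and c: "c \<in> borel_measurable (M \<Otimes>\<^sub>M M)" "\<And>z. 0 \<le> c z" "(\<integral>\<^sup>+z. c z \<partial>\<pi>) \<le> ennreal \<kappa>"
    and Z: "AE x in Q. x \<in> Z"
    and le: "\<And>x y. x \<in> Z \<Longrightarrow> y \<in> space M \<Longrightarrow> g y \<le> f x + lam * c (x, y)"
  shows "(\<integral>y. g y \<partial>P) \<le> (\<integral>x. f x \<partial>Q) + lam * \<kappa>"
proof -
  have sets_\<pi>: "sets \<pi> = sets (M \<Otimes>\<^sub>M M)" and Q: "distr \<pi> M fst = Q" and P: "distr \<pi> M snd = P"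
    using \<pi> by (auto simp: couplings_def)
  have fst: "fst \<in> measurable \<pi> M" and snd: "snd \<in> measurable \<pi> M"
    using measurable_cong_sets[OF sets_\<pi> refl] by auto
  have f_meas: "f \<in> borel_measurable M" and g_meas: "g \<in> borel_measurable M"
    using borel_measurable_integrable[OF f] borel_measurable_integrable[OF g]
      measurable_cong_sets[OF sets_distr refl, of \<pi> M fst] measurable_cong_sets[OF sets_distr refl, of \<pi> M snd]
    by (auto simp: Q P)
  have f_int: "integrable \<pi> (\<lambda>z. f (fst z))" and g_int: "integrable \<pi> (\<lambda>z. g (snd z))"
    using integrable_distr_eq[OF fst f_meas] integrable_distr_eq[OF snd g_meas] f g by (simp_all add: Q P)
  have c_meas: "c \<in> borel_measurable \<pi>"
    using measurable_cong_sets[OF sets_\<pi> refl] c(1) by blast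
  have c_int: "integrable \<pi> c"
    using c by (intro integrableI_nonneg c_meas) (auto simp: order_le_less_trans[OF _ ennreal_less_top])
  have "ennreal (\<integral>z. c z \<partial>\<pi>) \<le> ennreal \<kappa>"
    using nn_integral_eq_integral[OF c_int] c(2,3) by simp
  then have c_le: "(\<integral>z. c z \<partial>\<pi>) \<le> \<kappa>" using \<open>0 \<le> \<kappa>\<close> by (simp add: ennreal_le_iff)
  have "AE z in \<pi>. fst z \<in> Z"
    using Z unfolding Q[symmetric] by (rule AE_distrD[OF fst])
  then have "AE z in \<pi>. 0 \<le> f (fst z) + lam * c z - g (snd z)"
    using AE_space
  proof eventually_elim
    case (elim z)
    then show ?case using le[of "fst z" "snd z"] measurable_space[OF snd, of z] by simp
  qed
  then have "0 \<le> (\<integral>z. f (fst z) + lam * c z - g (snd z) \<partial>\<pi>)"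
    by (rule integral_nonneg_AE)
  also have "\<dots> = (\<integral>x. f x \<partial>Q) + lam * (\<integral>z. c z \<partial>\<pi>) - (\<integral>y. g y \<partial>P)"
    using f_int c_int g_int integral_distr[OF fst f_meas] integral_distr[OF snd g_meas]
    by (simp add: Q P)
  finally show ?thesis using mult_left_mono[OF c_le \<open>0 \<le> lam\<close>] by linarith
qed

lemma integral_le_wasserstein:
  fixes f g :: "vec \<Rightarrow> real"
  assumes W: "wasserstein (Idx n T) (Mtraj n T) Q P \<le> ennreal \<epsilon>" and "0 \<le> \<epsilon>" and "0 \<le> lam"
    and f: "integrable Q f" and g: "integrable P g" and Z: "AE x in Q. x \<in> Z"
    and le: "\<And>x y. x \<in> Z \<Longrightarrow> y \<in> space (Mtraj n T) \<Longrightarrow>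
               g y \<le> f x + lam * norm1 (Idx n T) (\<lambda>i. x i - y i)"
  shows "(\<integral>y. g y \<partial>P) \<le> (\<integral>x. f x \<partial>Q) + lam * \<epsilon>"
proof (rule field_le_epsilon)
  fix \<delta> :: real assume "0 < \<delta>"
  define \<epsilon>' where "\<epsilon>' = \<epsilon> + \<delta> / (lam + 1)"
  have "\<epsilon> < \<epsilon>'" using \<open>0 < \<delta>\<close> \<open>0 \<le> lam\<close> by (simp add: \<epsilon>'_def)
  then have "wasserstein (Idx n T) (Mtraj n T) Q P < ennreal \<epsilon>'"
    using W \<open>0 \<le> \<epsilon>\<close> by (simp add: order_le_less_trans ennreal_lessI)
  then obtain \<pi> where \<pi>: "\<pi> \<in> couplings (Mtraj n T) Q P"
    and cost: "(\<integral>\<^sup>+z. norm1 (Idx n T) (\<lambda>i. fst z i - snd z i) \<partial>\<pi>) < ennreal \<epsilon>'"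
    unfolding wasserstein_def by (auto simp: INF_less_iff)
  have "(\<integral>y. g y \<partial>P) \<le> (\<integral>x. f x \<partial>Q) + lam * \<epsilon>'"
  proof (rule integral_le_coupling[OF \<pi> \<open>0 \<le> lam\<close> _ f g borel_measurable_norm1_diff _ _ Z])
    show "0 \<le> \<epsilon>'" using \<open>0 \<le> \<epsilon>\<close> \<open>\<epsilon> < \<epsilon>'\<close> by simp
    show "0 \<le> norm1 (Idx n T) (\<lambda>i. fst z i - snd z i)" for z by (rule norm1_nonneg)
    show "(\<integral>\<^sup>+z. norm1 (Idx n T) (\<lambda>i. fst z i - snd z i) \<partial>\<pi>) \<le> ennreal \<epsilon>'"
      using cost by simp
    show "g y \<le> f x + lam * norm1 (Idx n T) (\<lambda>i. fst (x, y) i - snd (x, y) i)"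
      if "x \<in> Z" "y \<in> space (Mtraj n T)" for x y
      using le[OF that] by simp
  qed
  moreover have "lam * (\<delta> / (lam + 1)) \<le> \<delta>"
    using \<open>0 < \<delta>\<close> \<open>0 \<le> lam\<close> by (simp add: field_simps)
  ultimately show "(\<integral>y. g y \<partial>P) \<le> (\<integral>x. f x \<partial>Q) + lam * \<epsilon> + \<delta>"
    by (simp add: \<epsilon>'_def distrib_left)
qed

lemma wasserstein_empirical_le:
  assumes "finite A" and xs: "xs \<in> A \<rightarrow> space (Mtraj n T)" and ys: "ys \<in> A \<rightarrow> space (Mtraj n T)"
  shows "wasserstein (Idx n T) (Mtraj n T)
           (distr (uniform_count_measure A) (Mtraj n T) xs) (distr (uniform_count_measure A) (Mtraj n T) ys)
         \<le> ennreal ((\<Sum>a\<in>A. norm1 (Idx n T) (\<lambda>i. xs a i - ys a i)) / card A)"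
proof -
  let ?M = "Mtraj n T" and ?U = "uniform_count_measure A"
  have pair: "(\<lambda>a. (xs a, ys a)) \<in> measurable ?U (?M \<Otimes>\<^sub>M ?M)"
    using xs ys by (intro measurable_uniform_count_measure) (auto simp: space_pair_measure)
  define \<pi> where "\<pi> = distr ?U (?M \<Otimes>\<^sub>M ?M) (\<lambda>a. (xs a, ys a))"
  have "distr \<pi> ?M fst = distr ?U ?M xs" "distr \<pi> ?M snd = distr ?U ?M ys"
    unfolding \<pi>_def using distr_distr[OF measurable_fst pair] distr_distr[OF measurable_snd pair]
    by (simp_all add: comp_def)
  then have "\<pi> \<in> couplings ?M (distr ?U ?M xs) (distr ?U ?M ys)"
    by (simp add: couplings_def \<pi>_def)
  moreover have "(\<integral>\<^sup>+z. norm1 (Idx n T) (\<lambda>i. fst z i - snd z i) \<partial>\<pi>)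
      = ennreal ((\<Sum>a\<in>A. norm1 (Idx n T) (\<lambda>i. xs a i - ys a i)) / card A)"
    unfolding \<pi>_def using \<open>finite A\<close> pair measurable_space[OF pair] borel_measurable_norm1_diff norm1_nonneg
    by (subst nn_integral_distr_uniform_count_measure) (auto simp: space_uniform_count_measure)
  ultimately show ?thesis
    unfolding wasserstein_def by (metis (no_types, lifting) INF_lower)
qed

lemma distr_uniform_count_measure_in_lt_dists:
  assumes "finite A" and "A \<noteq> {}" and Z: "Z \<in> sets (Mtraj n T)" and xs: "xs \<in> A \<rightarrow> Z"
  shows "distr (uniform_count_measure A) (Mtraj n T) xs \<in> lt_dists (Idx n T) (Mtraj n T) Z"
proof -
  let ?M = "Mtraj n T" and ?U = "uniform_count_measure A"
  have xs_space: "xs \<in> A \<rightarrow> space ?M" using xs sets.sets_into_space[OF Z] by auto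
  note xs_meas = measurable_uniform_count_measure[OF xs_space]
  interpret U: prob_space ?U using prob_space_uniform_count_measure assms(1,2) .
  have "{x\<in>space ?M. x \<in> Z} \<in> sets ?M" using Z sets.sets_into_space[OF Z] by (simp add: Int_absorb1 Int_def[symmetric] Collect_mem_eq)
  moreover have "AE a in ?U. xs a \<in> Z"
    using xs by (intro AE_I2) (auto simp: space_uniform_count_measure)
  ultimately have "AE x in distr ?U ?M xs. x \<in> Z"
    by (simp add: AE_distr_iff[OF xs_meas])
  moreover have "(\<lambda>x. exp (norm1 (Idx n T) x powr 2)) \<in> borel_measurable ?M"
    using borel_measurable_norm1 by measurable
  then have "(\<integral>\<^sup>+x. exp (norm1 (Idx n T) x powr 2) \<partial>distr ?U ?M xs) < \<infinity>"
    using nn_integral_distr_uniform_count_measure[OF \<open>finite A\<close> xs_space] by simp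
  ultimately show ?thesis
    unfolding lt_dists_def dists_on_def using U.prob_space_distr[OF xs_meas]
    by (intro CollectI conjI exI[of _ 2]) auto
qed

section \<open>The worst-case expected cost\<close>

lemma Hcost_integrable:
  assumes "Q \<in> dists_on (Mtraj n T) (Zset n T p u)"
  shows "integrable Q (Hcost n T u)"
proof -
  interpret Q: prob_space Q using assms by (simp add: dists_on_def)
  have sets_Q: "sets Q = sets (Mtraj n T)" and Z: "AE x in Q. x \<in> Zset n T p u"
    using assms by (simp_all add: dists_on_def)
  have "Hcost n T u \<in> borel_measurable Q"
    by (subst measurable_cong_sets[OF sets_Q refl]) (rule borel_measurable_Hcost)
  moreover have "\<bar>Hcost n T u x\<bar> \<le> (\<Sum>i\<in>Idx n T. \<bar>rhoc p (fst i) (u i) * u i\<bar>) / T"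
    if x: "x \<in> Zset n T p u" for x
  proof -
    have "\<bar>x i * u i\<bar> \<le> \<bar>rhoc p (fst i) (u i) * u i\<bar>" if "i \<in> Idx n T" for i
      using Zset_memD[OF x that] unfolding abs_mult by (intro mult_right_mono) auto
    then have "\<bar>\<Sum>i\<in>Idx n T. x i * u i\<bar> \<le> (\<Sum>i\<in>Idx n T. \<bar>rhoc p (fst i) (u i) * u i\<bar>)"
      by (intro order_trans[OF sum_abs] sum_mono)
    then show ?thesis
      by (simp add: Hcost_def abs_mult divide_right_mono)
  qed
  ultimately show ?thesis
    using Z by (intro Q.integrable_const_bound) (auto elim!: eventually_mono)
qed

lemma sample_bounds_le_integral_Hcost:
  assumes "1 \<le> N" and "0 \<le> \<epsilon>" and "0 \<le> lam" and Q: "Q \<in> ambiguity_set n T p \<epsilon> N ws u"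
    and s: "\<And>l x. l < N \<Longrightarrow> x \<in> Zset n T p u \<Longrightarrow>
              s l \<le> Hcost n T u x + lam * norm1 (Idx n T) (\<lambda>i. x i - traj_vec n T p u (ws l) i)"
  shows "(\<Sum>l<N. s l) / N \<le> (\<integral>x. Hcost n T u x \<partial>Q) + lam * \<epsilon>"
proof -
  let ?I = "Idx n T" and ?\<rho> = "\<lambda>l. traj_vec n T p u (ws l)"
  \<comment> \<open>a coupling need not be deterministic, so the sample-wise bounds are merged into one function
      of the empirical point before integrating\<close>
  define \<phi> where "\<phi> y = (MAX l\<in>{..<N}. s l - lam * norm1 ?I (\<lambda>i. y i - ?\<rho> l i))" for y
  have s_le: "s l \<le> \<phi> (?\<rho> l)" if "l < N" for l
  proof -
    have "s l = s l - lam * norm1 ?I (\<lambda>i. ?\<rho> l i - ?\<rho> l i)" by (simp add: norm1_def)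
    also have "\<dots> \<le> \<phi> (?\<rho> l)" unfolding \<phi>_def using that by (intro Max_ge) (auto intro!: image_eqI[of _ _ l])
    finally show ?thesis .
  qed
  have \<phi>_meas: "\<phi> \<in> borel_measurable (Mtraj n T)"
    unfolding \<phi>_def norm1_def using measurable_Mtraj_component
    by (intro borel_measurable_Max) (auto intro!: borel_measurable_diff borel_measurable_times
        borel_measurable_sum borel_measurable_abs)
  have \<phi>_le: "\<phi> y \<le> Hcost n T u x + lam * norm1 ?I (\<lambda>i. x i - y i)" if "x \<in> Zset n T p u" for x y
    unfolding \<phi>_def using \<open>1 \<le> N\<close> \<open>0 \<le> lam\<close> s[OF _ that] by (intro MAX_sub_norm1_le) auto
  have \<rho>_space: "?\<rho> \<in> {..<N} \<rightarrow> space (Mtraj n T)" using traj_vec_in_space by blast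
  have Q_in: "wasserstein ?I (Mtraj n T) Q (empirical n T p N ws u) \<le> ennreal \<epsilon>"
    "Q \<in> dists_on (Mtraj n T) (Zset n T p u)"
    using Q by (auto simp: ambiguity_set_def lt_dists_def)
  have "(\<Sum>l<N. s l) / N \<le> (\<Sum>l<N. \<phi> (?\<rho> l)) / N"
    using s_le by (intro divide_right_mono sum_mono) auto
  also have "\<dots> = (\<integral>y. \<phi> y \<partial>empirical n T p N ws u)"
    unfolding empirical_def by (simp add: integral_distr_uniform_count_measure[OF _ \<rho>_space \<phi>_meas])
  also have "\<dots> \<le> (\<integral>x. Hcost n T u x \<partial>Q) + lam * \<epsilon>"
    using Q_in \<open>0 \<le> \<epsilon>\<close> \<open>0 \<le> lam\<close> Hcost_integrable[OF Q_in(2)] \<phi>_le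
      integrable_distr_uniform_count_measure[OF _ \<rho>_space \<phi>_meas]
    by (intro integral_le_wasserstein[where Z = "Zset n T p u", OF Q_in(1)])
      (auto simp: empirical_def dists_on_def)
  finally show ?thesis .
qed

lemma lowered_samples_in_ambiguity_set:
  assumes "1 \<le> N" and samples: "\<And>l. l < N \<Longrightarrow> traj_vec n T p u (ws l) \<in> Zset n T p u"
    and d: "\<And>l i. l < N \<Longrightarrow> i \<in> Idx n T \<Longrightarrow> 0 \<le> d l i \<and> d l i \<le> traj_vec n T p u (ws l) i"
    and budget: "(\<Sum>l<N. \<Sum>i\<in>Idx n T. d l i) \<le> N * \<epsilon>"
  shows "distr (uniform_count_measure {..<N}) (Mtraj n T)
           (\<lambda>l. restrict (\<lambda>i. traj_vec n T p u (ws l) i - d l i) (Idx n T))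
         \<in> ambiguity_set n T p \<epsilon> N ws u"
proof -
  define xs where "xs = (\<lambda>l. restrict (\<lambda>i. traj_vec n T p u (ws l) i - d l i) (Idx n T))"
  have xs: "xs \<in> {..<N} \<rightarrow> Zset n T p u"
    using d Zset_memD[OF samples] by (fastforce simp: xs_def Zset_def space_Mtraj)
  then have xs_space: "xs \<in> {..<N} \<rightarrow> space (Mtraj n T)"
    using sets.sets_into_space[OF sets_Zset] by blast
  have "(\<lambda>l. traj_vec n T p u (ws l)) \<in> {..<N} \<rightarrow> space (Mtraj n T)"
    using traj_vec_in_space by blast
  from wasserstein_empirical_le[OF _ xs_space this]
  have "wasserstein (Idx n T) (Mtraj n T) (distr (uniform_count_measure {..<N}) (Mtraj n T) xs)
      (empirical n T p N ws u)
      \<le> ennreal ((\<Sum>l<N. norm1 (Idx n T) (\<lambda>i. xs l i - traj_vec n T p u (ws l) i)) / N)"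
    by (simp add: empirical_def)
  also have "(\<Sum>l<N. norm1 (Idx n T) (\<lambda>i. xs l i - traj_vec n T p u (ws l) i)) = (\<Sum>l<N. \<Sum>i\<in>Idx n T. d l i)"
    using d by (auto simp: norm1_def xs_def intro!: sum.cong)
  also have "ennreal ((\<Sum>l<N. \<Sum>i\<in>Idx n T. d l i) / N) \<le> ennreal \<epsilon>"
    using budget \<open>1 \<le> N\<close> by (intro ennreal_leI) (simp add: divide_le_eq mult.commute)
  finally have "distr (uniform_count_measure {..<N}) (Mtraj n T) xs \<in> ambiguity_set n T p \<epsilon> N ws u"
    using distr_uniform_count_measure_in_lt_dists[OF _ _ sets_Zset xs] \<open>1 \<le> N\<close>
    by (simp add: ambiguity_set_def lessThan_empty_iff)
  then show ?thesis by (simp only: xs_def)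
qed

lemma worst_case_distribution:
  assumes "1 \<le> N" and "0 \<le> \<epsilon>" and u: "\<And>i. i \<in> Idx n T \<Longrightarrow> 0 \<le> u i"
    and samples: "\<And>l. l < N \<Longrightarrow> traj_vec n T p u (ws l) \<in> Zset n T p u"
  obtains lam Q where "0 \<le> lam" and "Q \<in> ambiguity_set n T p \<epsilon> N ws u"
    and "(\<integral>x. Hcost n T u x \<partial>Q)
           = - lam * \<epsilon> + (\<Sum>l<N. \<Sum>i\<in>Idx n T. min (u i / T) lam * traj_vec n T p u (ws l) i) / N"
proof -
  define K where "K = {..<N} \<times> Idx n T"
  define r where "r k = traj_vec n T p u (ws (fst k)) (snd k)" for k
  define c where "c k = u (snd k) / T" for k :: "nat \<times> nat \<times> nat"
  have "finite K" by (simp add: K_def finite_Idx)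
  \<comment> \<open>the cheapest way to spend the transport budget N * eps is to lower the sample densities
      with the largest cost coefficients first\<close>
  obtain lam d where "0 \<le> lam" and d: "\<And>k. k \<in> K \<Longrightarrow> 0 \<le> d k \<and> d k \<le> r k"
    and budget: "sum d K \<le> real N * \<epsilon>"
    and remaining: "(\<Sum>k\<in>K. c k * (r k - d k)) = (\<Sum>k\<in>K. min (c k) lam * r k) - lam * (real N * \<epsilon>)"
  proof (rule fractional_knapsack[OF \<open>finite K\<close>, of r c "real N * \<epsilon>"])
    show "0 \<le> r k" if "k \<in> K" for k using Zset_memD[OF samples] that by (auto simp: K_def r_def)
    show "0 \<le> c k" if "k \<in> K" for k using u that by (auto simp: c_def K_def)
    show "0 \<le> real N * \<epsilon>" using \<open>0 \<le> \<epsilon>\<close> by simp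
  qed blast
  define xs where "xs l = restrict (\<lambda>i. traj_vec n T p u (ws l) i - d (l, i)) (Idx n T)" for l
  have "distr (uniform_count_measure {..<N}) (Mtraj n T) xs \<in> ambiguity_set n T p \<epsilon> N ws u"
    unfolding xs_def using \<open>1 \<le> N\<close> samples d budget
    by (intro lowered_samples_in_ambiguity_set) (auto simp: K_def r_def sum.cartesian_product)
  moreover have "(\<integral>x. Hcost n T u x \<partial>distr (uniform_count_measure {..<N}) (Mtraj n T) xs)
      = (\<Sum>k\<in>K. c k * (r k - d k)) / N"
  proof -
    have xs_space: "xs \<in> {..<N} \<rightarrow> space (Mtraj n T)"
      by (auto simp: xs_def space_Mtraj)
    have "Hcost n T u (xs l) = (\<Sum>i\<in>Idx n T. c (l, i) * (r (l, i) - d (l, i)))" for l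
      unfolding Hcost_def by (auto simp: sum_distrib_left xs_def c_def r_def intro!: sum.cong)
    then show ?thesis
      using integral_distr_uniform_count_measure[OF _ xs_space borel_measurable_Hcost]
      by (simp add: K_def sum.cartesian_product)
  qed
  moreover have "(\<Sum>k\<in>K. min (c k) lam * r k)
      = (\<Sum>l<N. \<Sum>i\<in>Idx n T. min (u i / T) lam * traj_vec n T p u (ws l) i)"
    by (simp add: K_def sum.cartesian_product c_def r_def case_prod_beta)
  ultimately show ?thesis
    using that[OF \<open>0 \<le> lam\<close>] remaining \<open>1 \<le> N\<close> by (simp add: field_simps)
qed

section \<open>Duality for the reformulation (P3)\<close>

text \<open>The upper bound x <= rhoc p e v of Z(u) reads coeff * x <= fbar * rhobar, with the
  coefficient of eta in the constraints of (P3).\<close>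

lemma rhoc_mult_coeff:
  assumes "0 < fbar p e" and "0 < ubar p e" and "fbar p e < ubar p e * rhobar p e" and "0 \<le> v"
  shows "0 < fbar p e + (rhobar p e - fbar p e / ubar p e) * v"
    and "(fbar p e + (rhobar p e - fbar p e / ubar p e) * v) * rhoc p e v = fbar p e * rhobar p e"
proof -
  define D where "D = ubar p e * rhobar p e - fbar p e"
  have "0 < D" using assms by (simp add: D_def)
  have coeff: "fbar p e + (rhobar p e - fbar p e / ubar p e) * v = (fbar p e * ubar p e + v * D) / ubar p e"
    using assms by (simp add: D_def field_simps)
  have denom: "0 < fbar p e * ubar p e + v * D"
    using assms \<open>0 < D\<close> by (simp add: add_pos_nonneg)
  then show "0 < fbar p e + (rhobar p e - fbar p e / ubar p e) * v"
    using assms by (simp add: coeff)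
  have tau: "tau p e = fbar p e / D" by (simp add: tau_def D_def)
  have "tau p e * ubar p e + v = (fbar p e * ubar p e + v * D) / D"
    using \<open>0 < D\<close> by (simp add: tau field_simps)
  then have "rhoc p e v = fbar p e * rhobar p e * ubar p e / (fbar p e * ubar p e + v * D)"
    using \<open>0 < D\<close> by (simp add: rhoc_def tau)
  then show "(fbar p e + (rhobar p e - fbar p e / ubar p e) * v) * rhoc p e v = fbar p e * rhobar p e"
    using denom assms by (simp add: coeff)
qed

lemma dual_constraint_bound:
  fixes a b c x y \<eta> \<mu> \<nu> lam :: real
  assumes "0 \<le> x" and "a * x \<le> b" and "0 \<le> \<eta>" and "\<mu> \<le> a * \<eta>" and "\<nu> = \<mu> + c" and "\<bar>\<nu>\<bar> \<le> lam"
  shows "\<nu> * y - b * \<eta> \<le> c * x + lam * \<bar>x - y\<bar>"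
proof -
  have "\<mu> * x \<le> \<eta> * (a * x)"
    using mult_right_mono[OF \<open>\<mu> \<le> a * \<eta>\<close> \<open>0 \<le> x\<close>] by (simp add: ac_simps)
  also have "\<dots> \<le> b * \<eta>"
    using mult_left_mono[OF \<open>a * x \<le> b\<close> \<open>0 \<le> \<eta>\<close>] by (simp add: ac_simps)
  finally have "\<mu> * x \<le> b * \<eta>" .
  moreover have "\<nu> * (y - x) \<le> \<bar>\<nu>\<bar> * \<bar>x - y\<bar>"
    by (metis abs_ge_self abs_minus_commute abs_mult)
  then have "\<nu> * (y - x) \<le> lam * \<bar>x - y\<bar>"
    using mult_right_mono[OF \<open>\<bar>\<nu>\<bar> \<le> lam\<close> abs_ge_zero[of "x - y"]] by linarith
  moreover have "\<nu> * y = \<mu> * x + c * x + \<nu> * (y - x)"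
    using \<open>\<nu> = \<mu> + c\<close> by (simp add: algebra_simps)
  ultimately show ?thesis by linarith
qed

lemma controls_nonneg: "u \<in> controls n T \<Gamma> \<Longrightarrow> \<Gamma> \<subseteq> {0..} \<Longrightarrow> i \<in> Idx n T \<Longrightarrow> 0 \<le> u i"
  by (auto simp: controls_def)

lemma SUP_and_maximizers_eq_projection:
  fixes J :: "'a \<Rightarrow> 'c::complete_linorder" and g :: "'b \<Rightarrow> 'c"
  assumes proj: "\<pi> ` F \<subseteq> U" and le: "\<And>q. q \<in> F \<Longrightarrow> g q \<le> J (\<pi> q)"
    and attained: "\<And>u. u \<in> U \<Longrightarrow> \<exists>q\<in>F. \<pi> q = u \<and> J u = g q"
  shows "(SUP u\<in>U. J u) = (SUP q\<in>F. g q)"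
    and "{u\<in>U. \<forall>u'\<in>U. J u' \<le> J u} = \<pi> ` {q\<in>F. \<forall>q'\<in>F. g q' \<le> g q}"
proof -
  show "(SUP u\<in>U. J u) = (SUP q\<in>F. g q)"
  proof (rule SUP_eq)
    show "\<exists>q\<in>F. J u \<le> g q" if "u \<in> U" for u using attained[OF that] by force
    show "\<exists>u\<in>U. g q \<le> J u" if "q \<in> F" for q using proj le[OF that] that by blast
  qed
  show "{u\<in>U. \<forall>u'\<in>U. J u' \<le> J u} = \<pi> ` {q\<in>F. \<forall>q'\<in>F. g q' \<le> g q}"
  proof (intro subset_antisym subsetI)
    fix u assume "u \<in> {u\<in>U. \<forall>u'\<in>U. J u' \<le> J u}"
    then have "u \<in> U" and opt: "\<And>u'. u' \<in> U \<Longrightarrow> J u' \<le> J u" by auto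
    then obtain q where "q \<in> F" "\<pi> q = u" "J u = g q" using attained by blast
    moreover have "g q' \<le> g q" if "q' \<in> F" for q'
    proof -
      have "g q' \<le> J (\<pi> q')" by (rule le[OF that])
      also have "\<dots> \<le> J u" using opt proj that by blast
      finally show ?thesis using \<open>J u = g q\<close> by simp
    qed
    ultimately show "u \<in> \<pi> ` {q\<in>F. \<forall>q'\<in>F. g q' \<le> g q}" by blast
  next
    fix u assume "u \<in> \<pi> ` {q\<in>F. \<forall>q'\<in>F. g q' \<le> g q}"
    then obtain q where q: "q \<in> F" "u = \<pi> q" and opt: "\<And>q'. q' \<in> F \<Longrightarrow> g q' \<le> g q" by blast
    have "J u' \<le> J u" if u': "u' \<in> U" for u'
    proof -
      obtain q' where "q' \<in> F" "J u' = g q'" using attained[OF u'] by blast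
      then have "J u' \<le> g q" using opt by simp
      also have "\<dots> \<le> J u" using le q by simp
      finally show ?thesis .
    qed
    then show "u \<in> {u\<in>U. \<forall>u'\<in>U. J u' \<le> J u}" using proj q by blast
  qed
qed

locale highway =
  fixes n T :: nat and p :: hwy
  assumes n_pos: "1 \<le> n" and T_pos: "1 \<le> T"
    and fbar_pos: "\<And>e. e \<in> {1..n} \<Longrightarrow> 0 < fbar p e"
    and ubar_pos: "\<And>e. e \<in> {1..n} \<Longrightarrow> 0 < ubar p e"
    and fbar_less: "\<And>e. e \<in> {1..n} \<Longrightarrow> fbar p e < ubar p e * rhobar p e"
begin

lemma dual_terms_le_Hcost:
  assumes u: "\<And>i. i \<in> Idx n T \<Longrightarrow> 0 \<le> u i"
    and cons: "\<forall>(e, t)\<in>Idx n T.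
        (fbar p e + (rhobar p e - fbar p e / ubar p e) * u (e, t)) * \<eta> (e, t) - \<mu> (e, t) \<ge> 0 \<and>
        \<nu> (e, t) = \<mu> (e, t) + (1 / real T) * u (e, t) \<and> \<eta> (e, t) \<ge> 0"
    and \<nu>: "\<And>i. i \<in> Idx n T \<Longrightarrow> \<bar>\<nu> i\<bar> \<le> lam"
    and x: "x \<in> Zset n T p u"
  shows "(\<Sum>i\<in>Idx n T. \<nu> i * \<rho> i) - (\<Sum>(e, t)\<in>Idx n T. fbar p e * rhobar p e * \<eta> (e, t))
           \<le> Hcost n T u x + lam * norm1 (Idx n T) (\<lambda>i. x i - \<rho> i)"
proof -
  have "\<nu> i * \<rho> i - fbar p (fst i) * rhobar p (fst i) * \<eta> i \<le> 1 / T * (x i * u i) + lam * \<bar>x i - \<rho> i\<bar>"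
    if i: "i \<in> Idx n T" for i
  proof -
    obtain e t where i_eq: "i = (e, t)" by (cases i)
    define a where "a = fbar p e + (rhobar p e - fbar p e / ubar p e) * u i"
    have "e \<in> {1..n}" using i i_eq by (simp add: Idx_def)
    note coeff = rhoc_mult_coeff[OF fbar_pos[OF this] ubar_pos[OF this] fbar_less[OF this] u[OF i],
        folded a_def]
    have x_i: "0 \<le> x i" "x i \<le> rhoc p e (u i)"
      using Zset_memD[OF x i] i_eq by simp_all
    have "a * x i \<le> a * rhoc p e (u i)"
      using x_i coeff(1) by (intro mult_left_mono) simp_all
    then have capacity: "a * x i \<le> fbar p e * rhobar p e" using coeff(2) by simp
    have "\<mu> i \<le> a * \<eta> i" "\<nu> i = \<mu> i + 1 / T * u i" "0 \<le> \<eta> i"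
      using cons i i_eq by (auto simp: a_def)
    from dual_constraint_bound[OF x_i(1) capacity this(3,1,2) \<nu>[OF i], of "\<rho> i"]
    show ?thesis using i_eq by (simp add: mult_ac)
  qed
  then have "(\<Sum>i\<in>Idx n T. \<nu> i * \<rho> i - fbar p (fst i) * rhobar p (fst i) * \<eta> i)
      \<le> (\<Sum>i\<in>Idx n T. 1 / T * (x i * u i) + lam * \<bar>x i - \<rho> i\<bar>)"
    by (rule sum_mono)
  moreover have "(\<Sum>(e, t)\<in>Idx n T. fbar p e * rhobar p e * \<eta> (e, t))
      = (\<Sum>i\<in>Idx n T. fbar p (fst i) * rhobar p (fst i) * \<eta> i)"
    by (simp add: case_prod_beta)
  moreover have "(\<Sum>i\<in>Idx n T. 1 / T * (x i * u i) + lam * \<bar>x i - \<rho> i\<bar>)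
      = Hcost n T u x + lam * norm1 (Idx n T) (\<lambda>i. x i - \<rho> i)"
    unfolding Hcost_def norm1_def sum.distrib sum_distrib_left ..
  ultimately show ?thesis
    by (simp only: sum_subtractf)
qed

lemma weak_duality:
  assumes "1 \<le> N" and "0 \<le> \<epsilon>" and "\<Gamma> \<subseteq> {0..}" and q: "q \<in> feas3 n T p \<Gamma> N ws"
    and Q: "Q \<in> ambiguity_set n T p \<epsilon> N ws (fst q)"
  shows "obj3 n T p \<epsilon> N q \<le> (\<integral>x. Hcost n T (fst q) x \<partial>Q)"
proof -
  obtain u \<rho> lam \<mu> \<nu> \<eta> where q_eq: "q = (u, \<rho>, lam, \<mu>, \<nu>, \<eta>)" by (cases q)
  have u: "u \<in> controls n T \<Gamma>" and \<rho>: "\<And>l. l < N \<Longrightarrow> \<rho> l = traj_vec n T p u (ws l)"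
    and cons: "\<And>l. l < N \<Longrightarrow> \<forall>(e, t)\<in>Idx n T.
        (fbar p e + (rhobar p e - fbar p e / ubar p e) * u (e, t)) * \<eta> l (e, t) - \<mu> l (e, t) \<ge> 0 \<and>
        \<nu> l (e, t) = \<mu> l (e, t) + (1 / real T) * u (e, t) \<and> \<eta> l (e, t) \<ge> 0"
    and dual_norm: "\<And>l. l < N \<Longrightarrow> dual_norm (Idx n T) (\<nu> l) \<le> lam"
    using q by (auto simp: q_eq feas3_def)
  have \<nu>: "\<bar>\<nu> l i\<bar> \<le> lam" if "l < N" "i \<in> Idx n T" for l i
    using abs_le_dual_norm[OF finite_Idx \<open>i \<in> Idx n T\<close>, of "\<nu> l"] dual_norm[OF \<open>l < N\<close>] by linarith
  have "0 \<le> lam"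
    using \<nu>[of 0 "(1, 0)"] \<open>1 \<le> N\<close> Idx_nonempty[OF n_pos T_pos] by linarith
  define s where "s l = (\<Sum>i\<in>Idx n T. \<nu> l i * \<rho> l i) - (\<Sum>(e, t)\<in>Idx n T. fbar p e * rhobar p e * \<eta> l (e, t))"
    for l
  have "(\<Sum>l<N. s l) / N \<le> (\<integral>x. Hcost n T u x \<partial>Q) + lam * \<epsilon>"
  proof (rule sample_bounds_le_integral_Hcost[OF \<open>1 \<le> N\<close> \<open>0 \<le> \<epsilon>\<close> \<open>0 \<le> lam\<close>])
    show "Q \<in> ambiguity_set n T p \<epsilon> N ws u" using Q by (simp add: q_eq)
    show "s l \<le> Hcost n T u x + lam * norm1 (Idx n T) (\<lambda>i. x i - traj_vec n T p u (ws l) i)"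
      if "l < N" "x \<in> Zset n T p u" for l x
      unfolding s_def \<rho>[OF \<open>l < N\<close>, symmetric]
      using controls_nonneg[OF u \<open>\<Gamma> \<subseteq> {0..}\<close>] cons[OF \<open>l < N\<close>] \<nu>[OF \<open>l < N\<close>] \<open>x \<in> Zset n T p u\<close>
      by (rule dual_terms_le_Hcost)
  qed
  moreover have "obj3 n T p \<epsilon> N q = - lam * \<epsilon> + (\<Sum>l<N. s l) / N"
    by (simp add: q_eq obj3_def s_def sum_subtractf diff_divide_distrib)
  ultimately show ?thesis by (simp add: q_eq)
qed

lemma obj3_le_Jval:
  assumes "1 \<le> N" and "0 \<le> \<epsilon>" and "\<Gamma> \<subseteq> {0..}" and "q \<in> feas3 n T p \<Gamma> N ws"
  shows "ereal (obj3 n T p \<epsilon> N q) \<le> Jval n T p \<epsilon> N ws (fst q)"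
  unfolding Jval_def using weak_duality[OF assms] by (intro INF_greatest) simp

lemma Jval_attained:
  assumes "1 \<le> N" and "0 \<le> \<epsilon>" and "\<Gamma> \<subseteq> {0..}" and u: "u \<in> controls n T \<Gamma>"
    and samples: "\<And>l. l < N \<Longrightarrow> admissible n T p u (ws l) \<and> traj_vec n T p u (ws l) \<in> Zset n T p u"
  shows "\<exists>q\<in>feas3 n T p \<Gamma> N ws. fst q = u \<and> Jval n T p \<epsilon> N ws u = ereal (obj3 n T p \<epsilon> N q)"
proof -
  have u_nonneg: "\<And>i. i \<in> Idx n T \<Longrightarrow> 0 \<le> u i" using controls_nonneg[OF u \<open>\<Gamma> \<subseteq> {0..}\<close>] .
  obtain lam Q where "0 \<le> lam" and Q: "Q \<in> ambiguity_set n T p \<epsilon> N ws u"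
    and HQ: "(\<integral>x. Hcost n T u x \<partial>Q)
           = - lam * \<epsilon> + (\<Sum>l<N. \<Sum>i\<in>Idx n T. min (u i / T) lam * traj_vec n T p u (ws l) i) / N"
  proof (rule worst_case_distribution[OF \<open>1 \<le> N\<close> \<open>0 \<le> \<epsilon>\<close>, where u = u and p = p and ws = ws])
    show "0 \<le> u i" if "i \<in> Idx n T" for i using u_nonneg[OF that] .
    show "traj_vec n T p u (ws l) \<in> Zset n T p u" if "l < N" for l using samples[OF that] by blast
  qed blast
  \<comment> \<open>the worst case only lowers densities, so the upper bounds of Z(u) are slack and eta = 0\<close>
  define \<nu> where "\<nu> l i = min (u i / T) lam" for l :: nat and i
  define q :: p3var where "q = (u, \<lambda>l. traj_vec n T p u (ws l), lam, \<lambda>l i. \<nu> l i - u i / T, \<nu>, \<lambda>l i. 0)"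
  have "dual_norm (Idx n T) (\<nu> l) \<le> lam" for l
    unfolding dual_norm_def using finite_Idx Idx_nonempty[OF n_pos T_pos] u_nonneg \<open>0 \<le> lam\<close>
    by (subst Max_le_iff) (auto simp: \<nu>_def)
  then have q: "q \<in> feas3 n T p \<Gamma> N ws"
    using u samples by (auto simp: feas3_def q_def \<nu>_def)
  have "obj3 n T p \<epsilon> N q = (\<integral>x. Hcost n T u x \<partial>Q)"
    by (simp add: HQ obj3_def q_def \<nu>_def divide_inverse)
  then have "Jval n T p \<epsilon> N ws u \<le> ereal (obj3 n T p \<epsilon> N q)"
    unfolding Jval_def using Q by (metis INF_lower)
  moreover have "ereal (obj3 n T p \<epsilon> N q) \<le> Jval n T p \<epsilon> N ws u"
    using obj3_le_Jval[OF \<open>1 \<le> N\<close> \<open>0 \<le> \<epsilon>\<close> \<open>\<Gamma> \<subseteq> {0..}\<close> q] by (simp add: q_def)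
  ultimately show ?thesis using q by (intro bexI[of _ q]) (auto simp: q_def)
qed

lemma P3_reformulates_P2:
  assumes "1 \<le> N" and "0 \<le> \<epsilon>" and "\<Gamma> \<subseteq> {0..}"
    and samples: "\<forall>u\<in>controls n T \<Gamma>. \<forall>l<N. admissible n T p u (ws l) \<and> traj_vec n T p u (ws l) \<in> Zset n T p u"
  shows "(SUP u\<in>controls n T \<Gamma>. Jval n T p \<epsilon> N ws u)
          = (SUP q\<in>feas3 n T p \<Gamma> N ws. ereal (obj3 n T p \<epsilon> N q))
      \<and> {u \<in> controls n T \<Gamma>. \<forall>u'\<in>controls n T \<Gamma>. Jval n T p \<epsilon> N ws u' \<le> Jval n T p \<epsilon> N ws u}
          = fst ` {q \<in> feas3 n T p \<Gamma> N ws. \<forall>q'\<in>feas3 n T p \<Gamma> N ws. obj3 n T p \<epsilon> N q' \<le> obj3 n T p \<epsilon> N q}"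
proof -
  have proj: "fst ` feas3 n T p \<Gamma> N ws \<subseteq> controls n T \<Gamma>"
    by (auto simp: feas3_def)
  have le: "ereal (obj3 n T p \<epsilon> N q) \<le> Jval n T p \<epsilon> N ws (fst q)" if "q \<in> feas3 n T p \<Gamma> N ws" for q
    using obj3_le_Jval[OF assms(1-3) that] .
  have attained: "\<exists>q\<in>feas3 n T p \<Gamma> N ws. fst q = u \<and> Jval n T p \<epsilon> N ws u = ereal (obj3 n T p \<epsilon> N q)"
    if "u \<in> controls n T \<Gamma>" for u
  proof -
    have "\<And>l. l < N \<Longrightarrow> admissible n T p u (ws l) \<and> traj_vec n T p u (ws l) \<in> Zset n T p u"
      using samples that by blast
    then show ?thesis by (rule Jval_attained[OF assms(1-3) that])
  qed
  from SUP_and_maximizers_eq_projection[OF proj le attained] show ?thesis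
    by simp
qed

lemma finite_sample_guarantee:
  assumes "1 \<le> N" and "0 \<le> \<epsilon>" and "\<Gamma> \<subseteq> {0..}"
    and radius: "\<forall>u\<in>controls n T \<Gamma>. \<exists>S\<in>E. measure M S \<ge> 1 - \<beta> \<and>
                   (\<forall>ws\<in>S. P u \<in> ambiguity_set n T p \<epsilon> N ws u)"
  shows "\<forall>u\<in>controls n T \<Gamma>. \<exists>S\<in>E. measure M S \<ge> 1 - \<beta> \<and>
           (\<forall>ws\<in>S. \<forall>q\<in>feas3 n T p \<Gamma> N ws. fst q = u \<longrightarrow>
              obj3 n T p \<epsilon> N q \<le> (\<integral>x. Hcost n T u x \<partial>P u))"
proof
  fix u assume "u \<in> controls n T \<Gamma>"
  with radius obtain S where S: "S \<in> E" "measure M S \<ge> 1 - \<beta>"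
    and ambiguity: "\<forall>ws\<in>S. P u \<in> ambiguity_set n T p \<epsilon> N ws u"
    by blast
  have "obj3 n T p \<epsilon> N q \<le> (\<integral>x. Hcost n T u x \<partial>P u)"
    if "ws \<in> S" and q: "q \<in> feas3 n T p \<Gamma> N ws" and "fst q = u" for ws q
    using weak_duality[OF assms(1-3) q] ambiguity that by simp
  then show "\<exists>S\<in>E. measure M S \<ge> 1 - \<beta> \<and>
      (\<forall>ws\<in>S. \<forall>q\<in>feas3 n T p \<Gamma> N ws. fst q = u \<longrightarrow> obj3 n T p \<epsilon> N q \<le> (\<integral>x. Hcost n T u x \<partial>P u))"
    using S by blast
qed

end

theorem theorem2:
  fixes n T N :: nat and p :: hwy and \<Gamma> :: "real set" and Pw :: "varpi measure"
    and \<beta> \<epsilon> :: real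
  assumes n_ge: "n \<ge> 1" and T_ge: "T \<ge> 1" and N_ge: "N \<ge> 1"
    and hwy_ok: "\<forall>e\<in>{1..n}. hh p e > 0 \<and> rhobar p e > 0 \<and> fbar p e > 0 \<and> ubar p e > 0
                   \<and> ubar p e * rhobar p e > fbar p e"
    and Gamma_fin: "finite \<Gamma>" and Gamma_pos: "\<Gamma> \<subseteq> {0<..}"
    and Pw_prob: "prob_space Pw"
    and meas_om: "\<forall>t. (\<lambda>w. om w t) \<in> borel_measurable Pw"
    and meas_rho0: "\<forall>e. (\<lambda>w. rho0 w e) \<in> borel_measurable Pw"
    and meas_rin: "\<forall>e t. (\<lambda>w. rin w e t) \<in> borel_measurable Pw"
    and meas_rout: "\<forall>e t. (\<lambda>w. rout w e t) \<in> borel_measurable Pw"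
    and ranges: "\<forall>w\<in>space Pw. (\<forall>t<T. om w t \<ge> 0) \<and> (\<forall>e\<in>{1..n}. rho0 w e \<ge> 0) \<and>
                   (\<forall>e\<in>{1..n}. \<forall>t<T. 0 \<le> rin w e t \<and> rin w e t < 1 \<and> 0 \<le> rout w e t \<and> rout w e t < 1)"
    and light_tailed: "\<exists>a>1. (\<integral>\<^sup>+ w. ennreal (exp (varpi_norm n T w powr a)) \<partial>Pw) < \<infinity>"
    and model: "\<forall>w\<in>space Pw. \<forall>u\<in>controls n T \<Gamma>.
                  admissible n T p u w \<and> traj_vec n T p u w \<in> Zset n T p u"
    and beta: "0 < \<beta>" "\<beta> < 1" and eps_pos: "\<epsilon> > 0"
    and radius: "\<forall>u\<in>controls n T \<Gamma>. \<exists>S\<in>sets (PiM {..<N} (\<lambda>_. Pw)).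
                   measure (PiM {..<N} (\<lambda>_. Pw)) S \<ge> 1 - \<beta> \<and>
                   (\<forall>ws\<in>S. distr Pw (Mtraj n T) (traj_vec n T p u) \<in> ambiguity_set n T p \<epsilon> N ws u)"
  shows "(\<forall>ws\<in>space (PiM {..<N} (\<lambda>_. Pw)).
            (SUP u\<in>controls n T \<Gamma>. Jval n T p \<epsilon> N ws u)
              = (SUP q\<in>feas3 n T p \<Gamma> N ws. ereal (obj3 n T p \<epsilon> N q))
          \<and> {u \<in> controls n T \<Gamma>. \<forall>u'\<in>controls n T \<Gamma>. Jval n T p \<epsilon> N ws u' \<le> Jval n T p \<epsilon> N ws u}
              = fst ` {q \<in> feas3 n T p \<Gamma> N ws. \<forall>q'\<in>feas3 n T p \<Gamma> N ws. obj3 n T p \<epsilon> N q' \<le> obj3 n T p \<epsilon> N q})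
       \<and> (\<forall>u\<in>controls n T \<Gamma>. \<exists>S\<in>sets (PiM {..<N} (\<lambda>_. Pw)).
            measure (PiM {..<N} (\<lambda>_. Pw)) S \<ge> 1 - \<beta> \<and>
            (\<forall>ws\<in>S. \<forall>q\<in>feas3 n T p \<Gamma> N ws. fst q = u \<longrightarrow>
               obj3 n T p \<epsilon> N q \<le> (\<integral>x. Hcost n T u x \<partial>(distr Pw (Mtraj n T) (traj_vec n T p u)))))"
proof -
  interpret highway n T p
    using n_ge T_ge hwy_ok by unfold_locales auto
  have Gamma_nonneg: "\<Gamma> \<subseteq> {0..}" and "0 \<le> \<epsilon>"
    using Gamma_pos eps_pos by auto
  have samples: "\<forall>u\<in>controls n T \<Gamma>. \<forall>l<N. admissible n T p u (ws l) \<and> traj_vec n T p u (ws l) \<in> Zset n T p u"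
    if "ws \<in> space (PiM {..<N} (\<lambda>_. Pw))" for ws
    using model that by (simp add: space_PiM PiE_iff)
  show ?thesis
    by (rule conjI[OF ballI[OF P3_reformulates_P2[OF N_ge \<open>0 \<le> \<epsilon>\<close> Gamma_nonneg samples]]
          finite_sample_guarantee[OF N_ge \<open>0 \<le> \<epsilon>\<close> Gamma_nonneg radius]])
qed

end
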